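(* Let $k$ be a field, $V$ a $k$-vector space, and $\varphi\in\operatorname{End}_k(V)$ a finite potent endomorphism with index $i(\varphi)=r$ and AST-decomposition $V=W_\varphi\oplus U_\varphi$. Fix a Jordan basis of $U_\varphi$ induced by $\varphi|_{U_\varphi}$, given by pairwise disjoint index sets $S_1,\dots,S_r$, $\overline S=S_1\cup\dots\cup S_r$, and vectors $v_{s}\in U_\varphi$ ($s\in\overline S$) such that, writing $s_h$ for an element of $S_h$, one has $\varphi^{h}(v_{s_h})=0$ and $\bigcup_{h=1}^r\bigcup_{s_h\in S_h}\{v_{s_h},\varphi(v_{s_h}),\dots,\varphi^{h-1}(v_{s_h})\}$ is a basis of $U_\varphi$. Then the generalized inverses $g\in\operatorname{End}_k(U_\varphi)$ of $\varphi|_{U_\varphi}$ are exactly the linear maps determined, for each $1\le h\le r$ and $s_h\in S_h$, by $$g(\varphi^i(v_{s_h}))=\begin{cases}\varphi^{i-1}(v_{s_h})+\sum_{s_t\in\overline S}\lambda^{i}_{s_h,s_t}\,\varphi^{t-1}(v_{s_t}) & \text{if } 1\le i\le h-1,\\ \sum_{s_l\in\overline S}\sum_{0\le j\le l-1}\alpha^{j}_{s_h,s_l}\,\varphi^{j}(v_{s_l}) & \text{if } i=0,\end{cases}$$ where $\lambda^{i}_{s_h,s_t},\alpha^{j}_{s_h,s_l}\in k$ are arbitrary scalars such that, for each $s_h$ and $i$, $\lambda^{i}_{s_h,s_t}=0$ for all but finitely many $s_t$, and for each $s_h$, $\alpha^{j}_{s_h,s_l}=0$ for all but finitely many pairs $(s_l,j)$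 (here $t$, $l$ denote the indices with $s_t\in S_t$, $s_l\in S_l$).
   Context: An endomorphism $\varphi$ of a $k$-vector space $V$ is finite potent if $\varphi^n(V)$ is finite dimensional for some $n$. For such $\varphi$, the AST-decomposition is $V=U_\varphi\oplus W_\varphi$ where $U_\varphi=\{v\in V: \varphi^m(v)=0 \text{ for some } m\}$ and $W_\varphi=\{v\in V: p(\varphi)(v)=0 \text{ for some } p(x)\in k[x] \text{ coprime to } x\}$; both are $\varphi$-invariant, $\varphi|_{U_\varphi}$ is nilpotent, $W_\varphi$ is finite dimensional and $\varphi|_{W_\varphi}$ is an automorphism. The index $i(\varphi)$ is the nilpotency order of $\varphi|_{U_\varphi}$. A generalized inverse of an endomorphism $g_0$ of $U$ is an endomorphism $g$ of $U$ with $g_0\circ g\circ g_0=g_0$. *)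

theory Defs
  imports Complex_Main
begin

definition finite_dim_set :: "('k::field \<Rightarrow> 'v::ab_group_add \<Rightarrow> 'v) \<Rightarrow> 'v set \<Rightarrow> bool" where
  "finite_dim_set scale A \<longleftrightarrow> (\<exists>B. finite B \<and> A \<subseteq> module.span scale B)"

definition finite_potent :: "('k::field \<Rightarrow> 'v::ab_group_add \<Rightarrow> 'v) \<Rightarrow> ('v \<Rightarrow> 'v) \<Rightarrow> bool" where
  "finite_potent scale \<phi> \<longleftrightarrow> Vector_Spaces.linear scale scale \<phi> \<and>
     (\<exists>n. finite_dim_set scale (range (\<phi> ^^ n)))"

definition U_part :: "('v::zero \<Rightarrow> 'v) \<Rightarrow> 'v set" where
  "U_part \<phi> = {v. \<exists>m. (\<phi> ^^ m) v = 0}"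

definition ast_index :: "('v::zero \<Rightarrow> 'v) \<Rightarrow> nat" where
  "ast_index \<phi> = (LEAST n. \<forall>u\<in>U_part \<phi>. (\<phi> ^^ n) u = 0)"

text \<open>g is a (k-linear) endomorphism of the subspace U (only its values on U matter).\<close>
definition endo_on :: "('k \<Rightarrow> 'v::ab_group_add \<Rightarrow> 'v) \<Rightarrow> 'v set \<Rightarrow> ('v \<Rightarrow> 'v) \<Rightarrow> bool" where
  "endo_on scale U g \<longleftrightarrow> g ` U \<subseteq> U \<and>
     (\<forall>x\<in>U. \<forall>y\<in>U. g (x + y) = g x + g y) \<and>
     (\<forall>c. \<forall>x\<in>U. g (scale c x) = scale c (g x))"

definition gen_inverse_on :: "'v set \<Rightarrow> ('v \<Rightarrow> 'v) \<Rightarrow> ('v \<Rightarrow> 'v) \<Rightarrow> bool" where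
  "gen_inverse_on U f g \<longleftrightarrow> (\<forall>u\<in>U. f (g (f u)) = f u)"

text \<open>Admissible scalars: lam i s s' = lambda^i_{s,s'}, alpha s s' j = alpha^j_{s,s'};
  finitely many nonzero as in the paper.\<close>
definition admissible_scalars ::
  "nat \<Rightarrow> (nat \<Rightarrow> 'i set) \<Rightarrow> (nat \<Rightarrow> 'i \<Rightarrow> 'i \<Rightarrow> 'k::zero) \<Rightarrow> ('i \<Rightarrow> 'i \<Rightarrow> nat \<Rightarrow> 'k) \<Rightarrow> bool" where
  "admissible_scalars r S lam alpha \<longleftrightarrow>
     (\<forall>h\<in>{1..r}. \<forall>s\<in>S h. \<forall>i\<in>{1..h-1}.
        finite {s'. \<exists>t\<in>{1..r}. s' \<in> S t \<and> lam i s s' \<noteq> 0}) \<and>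
     (\<forall>h\<in>{1..r}. \<forall>s\<in>S h.
        finite {(s', j). \<exists>l\<in>{1..r}. s' \<in> S l \<and> j < l \<and> alpha s s' j \<noteq> 0})"

definition jordan_ginv_formula ::
  "('k::field \<Rightarrow> 'v::ab_group_add \<Rightarrow> 'v) \<Rightarrow> ('v \<Rightarrow> 'v) \<Rightarrow> nat \<Rightarrow> (nat \<Rightarrow> 'i set) \<Rightarrow> ('i \<Rightarrow> 'v)
     \<Rightarrow> (nat \<Rightarrow> 'i \<Rightarrow> 'i \<Rightarrow> 'k) \<Rightarrow> ('i \<Rightarrow> 'i \<Rightarrow> nat \<Rightarrow> 'k) \<Rightarrow> ('v \<Rightarrow> 'v) \<Rightarrow> bool" where
  "jordan_ginv_formula scale \<phi> r S v lam alpha g \<longleftrightarrow>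
     (\<forall>h\<in>{1..r}. \<forall>s\<in>S h.
        (\<forall>i\<in>{1..h-1}. g ((\<phi> ^^ i) (v s)) =
            (\<phi> ^^ (i - 1)) (v s) +
            (\<Sum>t\<in>{1..r}. \<Sum>s'\<in>{s'\<in>S t. lam i s s' \<noteq> 0}.
                scale (lam i s s') ((\<phi> ^^ (t - 1)) (v s')))) \<and>
        g (v s) =
            (\<Sum>l\<in>{1..r}. \<Sum>s'\<in>{s'\<in>S l. \<exists>j<l. alpha s s' j \<noteq> 0}. \<Sum>j<l.
                scale (alpha s s' j) ((\<phi> ^^ j) (v s'))))"

end

theory Submission
  imports Defs "HOL-Library.Disjoint_Sets"
begin

(*
  On U the vectors \<phi>^j(v s), j < h for s in S h, form a basis on which \<phi> acts as a shift:
  it maps each chain vector to the next one and the chain tops \<phi>^(h-1)(v s) to 0.  Hence the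
  kernel of \<phi> on U is spanned by the tops, and an endomorphism g of U satisfies \<phi> g \<phi> = \<phi>
  iff \<phi> g \<phi> agrees with \<phi> on the basis, i.e. iff g(\<phi>^i(v s)) - \<phi>^(i-1)(v s) lies in the
  span of the tops for 1 \<le> i < h, while the values g(v s) are unconstrained.  Expanding these
  vectors in the basis yields the scalars lambda and alpha; conversely any choice of scalars
  prescribes g on a basis and so defines an endomorphism.
*)

context vector_space
begin

lemma in_span_basis_kernelI:
  assumes f: "Vector_Spaces.linear scale scale f" and B: "independent B"
    and f_B: "f ` B \<subseteq> insert 0 B" and inj: "inj_on f (B - f -` {0})"
    and x: "x \<in> span B" and fx: "f x = 0"
  shows "x \<in> span (B \<inter> f -` {0})"
proof -
  interpret f: Vector_Spaces.linear scale scale f by (rule f)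
  from x obtain T u where T: "finite T" "T \<subseteq> B" and x_eq: "x = (\<Sum>b\<in>T. scale (u b) b)"
    unfolding span_explicit by blast
  define N where "N = T - f -` {0}"
  have inj_N: "inj_on f N"
    using inj by (rule inj_on_subset) (use T(2) in \<open>auto simp: N_def\<close>)
  have "(\<Sum>y\<in>f ` N. scale (u (inv_into N f y)) y) = (\<Sum>b\<in>N. scale (u b) (f b))"
    by (simp add: sum.reindex[OF inj_N] inv_into_f_f[OF inj_N])
  also have "\<dots> = (\<Sum>b\<in>T. scale (u b) (f b))"
    by (rule sum.mono_neutral_left) (auto simp: N_def T(1))
  also have "\<dots> = 0"
    using fx by (simp add: x_eq f.sum f.scale)
  finally have dep: "(\<Sum>y\<in>f ` N. scale (u (inv_into N f y)) y) = 0" .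
  have "f ` N \<subseteq> B"
    using f_B T(2) unfolding N_def by blast
  then have u_N: "u b = 0" if "b \<in> N" for b
    using independentD[OF B _ _ dep, of "f b"] T(1) that inv_into_f_f[OF inj_N that]
    by (simp add: N_def)
  have "x = (\<Sum>b\<in>T \<inter> f -` {0}. scale (u b) b)"
    unfolding x_eq by (rule sum.mono_neutral_right) (use T(1) u_N in \<open>auto simp: N_def\<close>)
  also have "\<dots> \<in> span (B \<inter> f -` {0})"
    using T(2) by (intro span_sum span_scale span_base) blast
  finally show ?thesis .
qed

lemma endo_on_span_0: "endo_on scale (span B) g \<Longrightarrow> g 0 = 0"
  unfolding endo_on_def by (metis span_zero scale_zero_left)

lemma gen_inverse_on_spanI:
  assumes f: "Vector_Spaces.linear scale scale f" and f_span: "f ` span B \<subseteq> span B"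
    and g: "endo_on scale (span B) g"
    and on_basis: "\<And>b. b \<in> B \<Longrightarrow> f (g (f b)) = f b"
  shows "gen_inverse_on (span B) f g"
proof -
  interpret f: Vector_Spaces.linear scale scale f by (rule f)
  have "subspace {x \<in> span B. f (g (f x)) = f x}"
    using g f_span endo_on_span_0[OF g] unfolding subspace_def endo_on_def
    by (auto simp: f.add f.scale span_zero span_add span_scale image_subset_iff)
  then have "span B \<subseteq> {x \<in> span B. f (g (f x)) = f x}"
    using on_basis span_base by (intro span_minimal) auto
  then show ?thesis
    unfolding gen_inverse_on_def by blast
qed

lemma span_image_finite_coefficients:
  assumes e: "inj_on e J" and x: "x \<in> span (e ` J)"
  obtains c where "finite {p \<in> J. c p \<noteq> 0}" "x = (\<Sum>p\<in>{p \<in> J. c p \<noteq> 0}. scale (c p) (e p))"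
proof -
  from x obtain T u where T: "finite T" "T \<subseteq> e ` J" and x_eq: "x = (\<Sum>b\<in>T. scale (u b) b)"
    unfolding span_explicit by blast
  define P where "P = e -` T \<inter> J"
  define c where "c p = (if p \<in> P then u (e p) else 0)" for p
  have P: "finite P" "inj_on e P" "e ` P = T"
    using finite_vimage_IntI[OF T(1) e] inj_on_subset[OF e] T(2) by (auto simp: P_def)
  have "(\<Sum>p\<in>{p \<in> J. c p \<noteq> 0}. scale (c p) (e p)) = (\<Sum>p\<in>P. scale (c p) (e p))"
    by (rule sum.mono_neutral_left[OF P(1)]) (auto simp: c_def P_def split: if_splits)
  also have "\<dots> = (\<Sum>p\<in>P. scale (u (e p)) (e p))"
    by (simp add: c_def)
  also have "\<dots> = x"
    using sum.reindex[OF P(2), of "\<lambda>b. scale (u b) b"] by (simp add: P(3) x_eq)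
  finally have "x = (\<Sum>p\<in>{p \<in> J. c p \<noteq> 0}. scale (c p) (e p))" ..
  moreover have "finite {p \<in> J. c p \<noteq> 0}"
    by (rule finite_subset[OF _ P(1)]) (auto simp: c_def P_def split: if_splits)
  ultimately show ?thesis using that by blast
qed

end

lemma sum_UN_support:
  assumes "finite L" "disjoint_family_on A L" "finite {x \<in> (\<Union>l\<in>L. A l). c x \<noteq> 0}"
  shows "(\<Sum>l\<in>L. \<Sum>x\<in>{x \<in> A l. c x \<noteq> 0}. F x) = (\<Sum>x\<in>{x \<in> (\<Union>l\<in>L. A l). c x \<noteq> 0}. F x)"
proof -
  have "{x \<in> (\<Union>l\<in>L. A l). c x \<noteq> 0} = (\<Union>l\<in>L. {x \<in> A l. c x \<noteq> 0})"
    by blast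
  moreover have "finite {x \<in> A l. c x \<noteq> 0}" if "l \<in> L" for l
    using that by (intro finite_subset[OF _ assms(3)]) blast
  ultimately show ?thesis
    using assms(1,2) unfolding disjoint_family_on_def
    by (simp only:) (rule sum.UNION_disjoint[symmetric]; blast)
qed

lemma sum_Sigma_support:
  assumes "finite Y" "finite {x \<in> X. \<exists>y\<in>Y. c x y \<noteq> 0}" "\<And>x y. c x y = 0 \<Longrightarrow> F x y = 0"
  shows "(\<Sum>x\<in>{x \<in> X. \<exists>y\<in>Y. c x y \<noteq> 0}. \<Sum>y\<in>Y. F x y)
         = (\<Sum>(x, y)\<in>{p \<in> X \<times> Y. case_prod c p \<noteq> 0}. F x y)"
  unfolding sum.cartesian_product
  by (rule sum.mono_neutral_right) (use assms in auto)

definition chain_index :: "nat \<Rightarrow> (nat \<Rightarrow> 'i set) \<Rightarrow> ('i \<times> nat) set" where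
  "chain_index r S = {(s, j). \<exists>h\<in>{1..r}. s \<in> S h \<and> j < h}"

definition chain_vector :: "('v \<Rightarrow> 'v) \<Rightarrow> ('i \<Rightarrow> 'v) \<Rightarrow> 'i \<times> nat \<Rightarrow> 'v" where
  "chain_vector \<phi> v = (\<lambda>(s, j). (\<phi> ^^ j) (v s))"

locale jordan_chains = vector_space scale
  for scale :: "'k::field \<Rightarrow> 'v::ab_group_add \<Rightarrow> 'v" +
  fixes \<phi> :: "'v \<Rightarrow> 'v" and r :: nat and S :: "nat \<Rightarrow> 'i set" and v :: "'i \<Rightarrow> 'v"
  assumes linear_\<phi>: "Vector_Spaces.linear scale scale \<phi>"
    and disjoint: "disjoint_family_on S {1..r}"
    and chain_end: "\<And>h s. h \<in> {1..r} \<Longrightarrow> s \<in> S h \<Longrightarrow> (\<phi> ^^ h) (v s) = 0"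
    and inj_chain_vector: "inj_on (chain_vector \<phi> v) (chain_index r S)"
    and independent_chains: "independent (chain_vector \<phi> v ` chain_index r S)"
begin

sublocale \<phi>: Vector_Spaces.linear scale scale \<phi>
  by (rule linear_\<phi>)

abbreviation "jordan_basis \<equiv> chain_vector \<phi> v ` chain_index r S"

abbreviation "sources \<equiv> \<Union>h\<in>{1..r}. S h"

definition chain_height :: "'i \<Rightarrow> nat" where
  "chain_height s = (THE h. h \<in> {1..r} \<and> s \<in> S h)"

definition chain_top :: "'i \<Rightarrow> 'v" where
  "chain_top s = (\<phi> ^^ (chain_height s - 1)) (v s)"

definition chain_combination :: "('i \<Rightarrow> nat \<Rightarrow> 'k) \<Rightarrow> 'v" where
  "chain_combination c = (\<Sum>l\<in>{1..r}. \<Sum>s\<in>{s \<in> S l. \<exists>j<l. c s j \<noteq> 0}. \<Sum>j<l.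
     scale (c s j) ((\<phi> ^^ j) (v s)))"

definition top_combination :: "('i \<Rightarrow> 'k) \<Rightarrow> 'v" where
  "top_combination d = (\<Sum>t\<in>{1..r}. \<Sum>s\<in>{s \<in> S t. d s \<noteq> 0}. scale (d s) ((\<phi> ^^ (t - 1)) (v s)))"

lemma jordan_ginv_formula_iff:
  "jordan_ginv_formula scale \<phi> r S v lam alpha g \<longleftrightarrow>
     (\<forall>h\<in>{1..r}. \<forall>s\<in>S h.
        (\<forall>i\<in>{1..h-1}. g ((\<phi> ^^ i) (v s)) = (\<phi> ^^ (i - 1)) (v s) + top_combination (lam i s)) \<and>
        g (v s) = chain_combination (alpha s))"
  unfolding jordan_ginv_formula_def chain_combination_def top_combination_def ..

lemma chain_height_eq: "h \<in> {1..r} \<Longrightarrow> s \<in> S h \<Longrightarrow> chain_height s = h"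
  using disjoint unfolding chain_height_def disjoint_family_on_def by (intro the_equality) blast+

lemma chain_top_eq: "h \<in> {1..r} \<Longrightarrow> s \<in> S h \<Longrightarrow> chain_top s = chain_vector \<phi> v (s, h - 1)"
  by (simp add: chain_top_def chain_height_eq chain_vector_def)

lemma chain_vector_Suc: "chain_vector \<phi> v (s, Suc j) = \<phi> (chain_vector \<phi> v (s, j))"
  by (simp add: chain_vector_def)

lemma \<phi>_chain_top: "s \<in> sources \<Longrightarrow> \<phi> (chain_top s) = 0"
proof -
  assume "s \<in> sources"
  then obtain h where h: "h \<in> {1..r}" "s \<in> S h" by blast
  then obtain k where k: "h = Suc k"
    using not0_implies_Suc by fastforce
  have "\<phi> (chain_top s) = (\<phi> ^^ h) (v s)"
    by (simp add: chain_top_eq[OF h] chain_vector_def k)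
  then show ?thesis
    using chain_end[OF h] by simp
qed

lemma chain_index_cases:
  assumes "(s, j) \<in> chain_index r S"
  obtains "(s, Suc j) \<in> chain_index r S"
  | "chain_vector \<phi> v (s, j) = chain_top s" "s \<in> sources"
proof -
  from assms obtain h where h: "h \<in> {1..r}" "s \<in> S h" "j < h"
    unfolding chain_index_def by blast
  show ?thesis
  proof (cases "Suc j < h")
    case True
    with h show ?thesis using that(1) unfolding chain_index_def by blast
  next
    case False
    with h have "j = h - 1" by simp
    show ?thesis
      by (rule that(2)) (use h chain_top_eq[OF h(1,2)] \<open>j = h - 1\<close> in auto)
  qed
qed

lemma \<phi>_jordan_basis: "\<phi> ` jordan_basis \<subseteq> insert 0 jordan_basis"
proof clarify
  fix s j assume "(s, j) \<in> chain_index r S" "\<phi> (chain_vector \<phi> v (s, j)) \<notin> jordan_basis"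
  then show "\<phi> (chain_vector \<phi> v (s, j)) = 0"
    by (cases rule: chain_index_cases) (auto simp: \<phi>_chain_top simp flip: chain_vector_Suc)
qed

lemma \<phi>_span_jordan_basis: "\<phi> ` span jordan_basis \<subseteq> span jordan_basis"
proof -
  have "\<phi> ` span jordan_basis = span (\<phi> ` jordan_basis)"
    by (simp add: \<phi>.span_image)
  also have "\<dots> \<subseteq> span jordan_basis"
    using \<phi>_jordan_basis by (metis span_insert_0 span_mono)
  finally show ?thesis .
qed

lemma jordan_basis_kernel: "jordan_basis \<inter> \<phi> -` {0} = chain_top ` sources"
proof (intro equalityI subsetI)
  fix b assume b: "b \<in> jordan_basis \<inter> \<phi> -` {0}"
  then obtain s j where sj: "(s, j) \<in> chain_index r S" "b = chain_vector \<phi> v (s, j)" by auto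
  have "0 \<notin> jordan_basis"
    using independent_chains dependent_zero by blast
  with sj b show "b \<in> chain_top ` sources"
    by (cases rule: chain_index_cases) (auto simp flip: chain_vector_Suc)
next
  fix b assume "b \<in> chain_top ` sources"
  then obtain h s where "h \<in> {1..r}" "s \<in> S h" "b = chain_top s" by blast
  then show "b \<in> jordan_basis \<inter> \<phi> -` {0}"
    using \<phi>_chain_top chain_top_eq unfolding chain_index_def by force
qed

lemma inj_on_\<phi>_jordan_basis: "inj_on \<phi> (jordan_basis - \<phi> -` {0})"
proof (rule inj_onI)
  have shift: "\<exists>s j. (s, Suc j) \<in> chain_index r S \<and>
      x = chain_vector \<phi> v (s, j) \<and> \<phi> x = chain_vector \<phi> v (s, Suc j)"
    if "x \<in> jordan_basis - \<phi> -` {0}" for x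
  proof -
    from that obtain s j where sj: "(s, j) \<in> chain_index r S" "x = chain_vector \<phi> v (s, j)"
      "\<phi> x \<noteq> 0" by auto
    then have "(s, Suc j) \<in> chain_index r S"
      by (cases rule: chain_index_cases) (auto simp: \<phi>_chain_top)
    with sj show ?thesis
      by (auto simp: chain_vector_Suc)
  qed
  fix x y assume x: "x \<in> jordan_basis - \<phi> -` {0}" and y: "y \<in> jordan_basis - \<phi> -` {0}"
    and eq: "\<phi> x = \<phi> y"
  obtain s j where sj: "(s, Suc j) \<in> chain_index r S" "x = chain_vector \<phi> v (s, j)"
    "\<phi> x = chain_vector \<phi> v (s, Suc j)"
    using shift[OF x] by blast
  obtain s' j' where sj': "(s', Suc j') \<in> chain_index r S" "y = chain_vector \<phi> v (s', j')"
    "\<phi> y = chain_vector \<phi> v (s', Suc j')"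
    using shift[OF y] by blast
  have "(s, Suc j) = (s', Suc j')"
    using inj_onD[OF inj_chain_vector _ sj(1) sj'(1)] eq sj(3) sj'(3) by simp
  then show "x = y"
    using sj(2) sj'(2) by simp
qed

lemma kernel_\<phi>_in_span_chain_tops:
  "x \<in> span jordan_basis \<Longrightarrow> \<phi> x = 0 \<Longrightarrow> x \<in> span (chain_top ` sources)"
  using in_span_basis_kernelI[OF linear_\<phi> independent_chains \<phi>_jordan_basis
      inj_on_\<phi>_jordan_basis]
  by (simp add: jordan_basis_kernel)

lemma inj_on_chain_top: "inj_on chain_top sources"
proof (rule inj_onI, clarify)
  fix h h' s s'
  assume "h \<in> {1..r}" "s \<in> S h" "h' \<in> {1..r}" "s' \<in> S h'" "chain_top s = chain_top s'"
  then have "(s, h - 1) = (s', h' - 1)"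
    by (intro inj_onD[OF inj_chain_vector]) (auto simp: chain_top_eq chain_index_def)
  then show "s = s'" by simp
qed

lemma chain_power_in_span:
  "h \<in> {1..r} \<Longrightarrow> s \<in> S h \<Longrightarrow> j < h \<Longrightarrow> (\<phi> ^^ j) (v s) \<in> span jordan_basis"
  by (intro span_base image_eqI[of _ _ "(s, j)"]) (auto simp: chain_vector_def chain_index_def)

lemma \<phi>_funpow_pred: "0 < i \<Longrightarrow> \<phi> ((\<phi> ^^ (i - 1)) x) = (\<phi> ^^ i) x"
  by (cases i) auto

lemma chain_combination_eq_sum:
  assumes fin: "finite {p \<in> chain_index r S. case_prod c p \<noteq> 0}"
  shows "chain_combination c =
    (\<Sum>p\<in>{p \<in> chain_index r S. case_prod c p \<noteq> 0}. scale (case_prod c p) (chain_vector \<phi> v p))"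
proof -
  define A where "A l = S l \<times> {..<l}" for l
  have index_eq: "chain_index r S = (\<Union>l\<in>{1..r}. A l)"
    by (auto simp: chain_index_def A_def)
  have "finite {s \<in> S l. \<exists>j\<in>{..<l}. c s j \<noteq> 0}" if "l \<in> {1..r}" for l
    by (rule finite_subset[OF _ finite_imageI[OF fin, of fst]])
      (use that in \<open>force simp: chain_index_def\<close>)
  then have "chain_combination c = (\<Sum>l\<in>{1..r}. \<Sum>(s, j)\<in>{p \<in> A l. case_prod c p \<noteq> 0}.
      scale (c s j) ((\<phi> ^^ j) (v s)))"
    unfolding chain_combination_def A_def
    by (intro sum.cong refl, subst sum_Sigma_support[symmetric]) (auto simp: Bex_def)
  also have "\<dots> = (\<Sum>p\<in>{p \<in> chain_index r S. case_prod c p \<noteq> 0}.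
      scale (case_prod c p) (chain_vector \<phi> v p))"
    unfolding index_eq using fin disjoint
    by (subst sum_UN_support) (auto simp: index_eq A_def disjoint_family_on_def chain_vector_def
        intro!: sum.cong)
  finally show ?thesis .
qed

lemma top_combination_eq_sum:
  assumes fin: "finite {s \<in> sources. d s \<noteq> 0}"
  shows "top_combination d = (\<Sum>s\<in>{s \<in> sources. d s \<noteq> 0}. scale (d s) (chain_top s))"
proof -
  have "top_combination d = (\<Sum>t\<in>{1..r}. \<Sum>s\<in>{s \<in> S t. d s \<noteq> 0}. scale (d s) (chain_top s))"
    unfolding top_combination_def by (intro sum.cong refl) (simp add: chain_top_eq chain_vector_def)
  also have "\<dots> = (\<Sum>s\<in>{s \<in> sources. d s \<noteq> 0}. scale (d s) (chain_top s))"
    by (rule sum_UN_support[OF _ disjoint fin]) simp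
  finally show ?thesis .
qed

lemma chain_combination_in_span: "chain_combination c \<in> span jordan_basis"
  unfolding chain_combination_def
  by (intro span_sum span_scale span_base) (force simp: chain_index_def chain_vector_def)

lemma top_combination_in_span: "top_combination d \<in> span jordan_basis"
  unfolding top_combination_def
  by (intro span_sum span_scale span_base) (force simp: chain_index_def chain_vector_def)

lemma \<phi>_top_combination: "\<phi> (top_combination d) = 0"
proof -
  have "\<phi> ((\<phi> ^^ (t - 1)) (v s)) = 0" if "t \<in> {1..r}" "s \<in> S t" for t s
  proof -
    have "s \<in> sources" using that by blast
    from \<phi>_chain_top[OF this] show ?thesis
      by (simp add: chain_top_eq[OF that] chain_vector_def)
  qed
  then show ?thesis
    unfolding top_combination_def by (simp add: \<phi>.sum \<phi>.scale)
qed

lemma ex_chain_combination: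
  assumes "x \<in> span jordan_basis"
  shows "\<exists>c. finite {(s, j). \<exists>l\<in>{1..r}. s \<in> S l \<and> j < l \<and> c s j \<noteq> 0} \<and>
    x = chain_combination c"
proof -
  obtain c where fin: "finite {p \<in> chain_index r S. c p \<noteq> 0}" and
    x: "x = (\<Sum>p\<in>{p \<in> chain_index r S. c p \<noteq> 0}. scale (c p) (chain_vector \<phi> v p))"
    using span_image_finite_coefficients[OF inj_chain_vector assms] .
  have "{(s, j). \<exists>l\<in>{1..r}. s \<in> S l \<and> j < l \<and> curry c s j \<noteq> 0} = {p \<in> chain_index r S. c p \<noteq> 0}"
    by (auto simp: chain_index_def)
  with fin x show ?thesis
    by (intro exI[of _ "curry c"]) (simp add: chain_combination_eq_sum)
qed

lemma ex_top_combination: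
  assumes "x \<in> span jordan_basis" "\<phi> x = 0"
  shows "\<exists>d. finite {s. \<exists>t\<in>{1..r}. s \<in> S t \<and> d s \<noteq> 0} \<and> x = top_combination d"
proof -
  obtain d where fin: "finite {s \<in> sources. d s \<noteq> 0}" and
    x: "x = (\<Sum>s\<in>{s \<in> sources. d s \<noteq> 0}. scale (d s) (chain_top s))"
    using span_image_finite_coefficients[OF inj_on_chain_top kernel_\<phi>_in_span_chain_tops[OF assms]] .
  have "{s. \<exists>t\<in>{1..r}. s \<in> S t \<and> d s \<noteq> 0} = {s \<in> sources. d s \<noteq> 0}"
    by blast
  with fin x show ?thesis
    by (intro exI[of _ d]) (simp add: top_combination_eq_sum)
qed

lemma gen_inverse_on_iff_chain_steps:
  assumes g: "endo_on scale (span jordan_basis) g"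
  shows "gen_inverse_on (span jordan_basis) \<phi> g \<longleftrightarrow>
    (\<forall>h\<in>{1..r}. \<forall>s\<in>S h. \<forall>i\<in>{1..h-1}. \<phi> (g ((\<phi> ^^ i) (v s))) = (\<phi> ^^ i) (v s))"
proof
  assume gi: "gen_inverse_on (span jordan_basis) \<phi> g"
  show "\<forall>h\<in>{1..r}. \<forall>s\<in>S h. \<forall>i\<in>{1..h-1}. \<phi> (g ((\<phi> ^^ i) (v s))) = (\<phi> ^^ i) (v s)"
  proof (intro ballI)
    fix h s i assume "h \<in> {1..r}" "s \<in> S h" "i \<in> {1..h-1}"
    then have "(\<phi> ^^ (i - 1)) (v s) \<in> span jordan_basis"
      by (intro chain_power_in_span) auto
    moreover have "\<phi> ((\<phi> ^^ (i - 1)) (v s)) = (\<phi> ^^ i) (v s)"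
      using \<open>i \<in> {1..h-1}\<close> by (intro \<phi>_funpow_pred) auto
    ultimately show "\<phi> (g ((\<phi> ^^ i) (v s))) = (\<phi> ^^ i) (v s)"
      using gi unfolding gen_inverse_on_def by metis
  qed
next
  assume steps: "\<forall>h\<in>{1..r}. \<forall>s\<in>S h. \<forall>i\<in>{1..h-1}. \<phi> (g ((\<phi> ^^ i) (v s))) = (\<phi> ^^ i) (v s)"
  show "gen_inverse_on (span jordan_basis) \<phi> g"
  proof (rule gen_inverse_on_spanI[OF linear_\<phi> \<phi>_span_jordan_basis g])
    fix b assume "b \<in> jordan_basis"
    then obtain s j where sj: "(s, j) \<in> chain_index r S" "b = chain_vector \<phi> v (s, j)" by auto
    then show "\<phi> (g (\<phi> b)) = \<phi> b"
    proof (cases rule: chain_index_cases)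
      case 1
      then obtain h where h: "h \<in> {1..r}" "s \<in> S h" "Suc j < h"
        unfolding chain_index_def by auto
      then have "Suc j \<in> {1..h-1}" by auto
      with h steps have "\<phi> (g ((\<phi> ^^ Suc j) (v s))) = (\<phi> ^^ Suc j) (v s)"
        by blast
      then show ?thesis
        by (simp add: sj(2) chain_vector_def)
    next
      case 2
      then show ?thesis
        using sj(2) endo_on_span_0[OF g] by (simp add: \<phi>_chain_top)
    qed
  qed
qed

lemma ex_chain_combinations:
  assumes "\<And>h s. h \<in> {1..r} \<Longrightarrow> s \<in> S h \<Longrightarrow> w s \<in> span jordan_basis"
  shows "\<exists>alpha. \<forall>h\<in>{1..r}. \<forall>s\<in>S h.
    finite {(s', j). \<exists>l\<in>{1..r}. s' \<in> S l \<and> j < l \<and> alpha s s' j \<noteq> 0} \<and>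
    w s = chain_combination (alpha s)"
proof -
  define alpha where "alpha s = (SOME c.
    finite {(s', j). \<exists>l\<in>{1..r}. s' \<in> S l \<and> j < l \<and> c s' j \<noteq> 0} \<and> w s = chain_combination c)"
    for s
  have "finite {(s', j). \<exists>l\<in>{1..r}. s' \<in> S l \<and> j < l \<and> alpha s s' j \<noteq> 0} \<and>
      w s = chain_combination (alpha s)" if "h \<in> {1..r}" "s \<in> S h" for h s
    unfolding alpha_def by (rule someI_ex[OF ex_chain_combination[OF assms[OF that]]])
  then show ?thesis
    by blast
qed

lemma ex_top_combinations:
  assumes "\<And>h s i. h \<in> {1..r} \<Longrightarrow> s \<in> S h \<Longrightarrow> i \<in> {1..h-1} \<Longrightarrow>
    w i s \<in> span jordan_basis \<and> \<phi> (w i s) = 0"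
  shows "\<exists>lam. \<forall>h\<in>{1..r}. \<forall>s\<in>S h. \<forall>i\<in>{1..h-1}.
    finite {s'. \<exists>t\<in>{1..r}. s' \<in> S t \<and> lam i s s' \<noteq> 0} \<and> w i s = top_combination (lam i s)"
proof -
  define lam where "lam i s = (SOME d.
    finite {s'. \<exists>t\<in>{1..r}. s' \<in> S t \<and> d s' \<noteq> 0} \<and> w i s = top_combination d)" for i s
  have "finite {s'. \<exists>t\<in>{1..r}. s' \<in> S t \<and> lam i s s' \<noteq> 0} \<and> w i s = top_combination (lam i s)"
    if "h \<in> {1..r}" "s \<in> S h" "i \<in> {1..h-1}" for h s i
    using assms[OF that] unfolding lam_def by (intro someI_ex[OF ex_top_combination]) auto
  then show ?thesis
    by blast
qed

lemma jordan_ginv_formula_if_gen_inverse_on: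
  assumes g: "endo_on scale (span jordan_basis) g" and gi: "gen_inverse_on (span jordan_basis) \<phi> g"
  shows "\<exists>lam alpha. admissible_scalars r S lam alpha \<and> jordan_ginv_formula scale \<phi> r S v lam alpha g"
proof -
  have steps: "\<phi> (g ((\<phi> ^^ i) (v s))) = (\<phi> ^^ i) (v s)"
    if "h \<in> {1..r}" "s \<in> S h" "i \<in> {1..h-1}" for h s i
    using that gi gen_inverse_on_iff_chain_steps[OF g] by blast
  have g_span: "g x \<in> span jordan_basis" if "x \<in> span jordan_basis" for x
    using g that unfolding endo_on_def by blast
  obtain alpha where alpha: "\<forall>h\<in>{1..r}. \<forall>s\<in>S h.
      finite {(s', j). \<exists>l\<in>{1..r}. s' \<in> S l \<and> j < l \<and> alpha s s' j \<noteq> 0} \<and>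
      g (v s) = chain_combination (alpha s)"
  proof (atomize_elim, rule ex_chain_combinations)
    fix h s assume "h \<in> {1..r}" "s \<in> S h"
    then show "g (v s) \<in> span jordan_basis"
      using chain_power_in_span[of h s 0] by (simp add: g_span)
  qed
  obtain lam where lam: "\<forall>h\<in>{1..r}. \<forall>s\<in>S h. \<forall>i\<in>{1..h-1}.
      finite {s'. \<exists>t\<in>{1..r}. s' \<in> S t \<and> lam i s s' \<noteq> 0} \<and>
      g ((\<phi> ^^ i) (v s)) - (\<phi> ^^ (i - 1)) (v s) = top_combination (lam i s)"
  proof (atomize_elim, rule ex_top_combinations, rule conjI)
    fix h s i assume "h \<in> {1..r}" "s \<in> S h" "i \<in> {1..h-1}"
    then show "g ((\<phi> ^^ i) (v s)) - (\<phi> ^^ (i - 1)) (v s) \<in> span jordan_basis"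
      by (intro span_diff g_span chain_power_in_span) auto
    show "\<phi> (g ((\<phi> ^^ i) (v s)) - (\<phi> ^^ (i - 1)) (v s)) = 0"
      using steps[OF \<open>h \<in> {1..r}\<close> \<open>s \<in> S h\<close> \<open>i \<in> {1..h-1}\<close>] \<phi>_funpow_pred[of i]
        \<open>i \<in> {1..h-1}\<close> by (simp add: \<phi>.diff)
  qed
  show ?thesis
  proof (intro exI conjI)
    show "admissible_scalars r S lam alpha"
      unfolding admissible_scalars_def using alpha lam by (intro conjI ballI) blast+
    show "jordan_ginv_formula scale \<phi> r S v lam alpha g"
      unfolding jordan_ginv_formula_iff using alpha lam by (simp add: diff_eq_eq add.commute)
  qed
qed

lemma gen_inverse_on_if_jordan_ginv_formula:
  assumes g: "endo_on scale (span jordan_basis) g"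
    and formula: "jordan_ginv_formula scale \<phi> r S v lam alpha g"
  shows "gen_inverse_on (span jordan_basis) \<phi> g"
  unfolding gen_inverse_on_iff_chain_steps[OF g]
proof (intro ballI)
  fix h s i assume "h \<in> {1..r}" "s \<in> S h" "i \<in> {1..h-1}"
  with formula have "g ((\<phi> ^^ i) (v s)) = (\<phi> ^^ (i - 1)) (v s) + top_combination (lam i s)"
    unfolding jordan_ginv_formula_iff by blast
  then show "\<phi> (g ((\<phi> ^^ i) (v s))) = (\<phi> ^^ i) (v s)"
    using \<phi>_funpow_pred[of i] \<open>i \<in> {1..h-1}\<close> by (simp add: \<phi>.add \<phi>_top_combination)
qed

lemma ex_jordan_ginv_formula:
  "\<exists>g. endo_on scale (span jordan_basis) g \<and> jordan_ginv_formula scale \<phi> r S v lam alpha g"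
proof -
  interpret pair: vector_space_pair scale scale ..
  define val where "val = (\<lambda>(s, i). if i = 0 then chain_combination (alpha s)
    else (\<phi> ^^ (i - 1)) (v s) + top_combination (lam i s))"
  define g where "g = pair.construct jordan_basis (val \<circ> inv_into (chain_index r S) (chain_vector \<phi> v))"
  interpret g: Vector_Spaces.linear scale scale g
    unfolding g_def by (rule pair.linear_construct[OF independent_chains])
  have g_basis: "g (chain_vector \<phi> v p) = val p" if "p \<in> chain_index r S" for p
    using pair.construct_basis[OF independent_chains] inv_into_f_f[OF inj_chain_vector that] that
    unfolding g_def by auto
  have "val p \<in> span jordan_basis" if "p \<in> chain_index r S" for p
  proof -
    obtain s i where p: "p = (s, i)"
      by fastforce
    with that obtain h where "h \<in> {1..r}" "s \<in> S h" "i < h"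
      unfolding chain_index_def by blast
    with p show ?thesis
      using chain_power_in_span[of h s "i - 1"]
      by (auto simp: val_def chain_combination_in_span top_combination_in_span intro!: span_add)
  qed
  then have "span (val ` chain_index r S) \<subseteq> span jordan_basis"
    by (intro span_minimal) auto
  moreover have "g x \<in> span (val ` chain_index r S)" for x
  proof -
    have "(val \<circ> inv_into (chain_index r S) (chain_vector \<phi> v)) ` jordan_basis = val ` chain_index r S"
      by (simp only: image_comp[symmetric] inv_into_image_cancel[OF inj_chain_vector subset_refl])
    then show ?thesis
      using pair.construct_in_span[OF independent_chains] unfolding g_def by metis
  qed
  ultimately have "endo_on scale (span jordan_basis) g"
    unfolding endo_on_def by (auto simp: g.add g.scale)
  moreover have "jordan_ginv_formula scale \<phi> r S v lam alpha g"
    unfolding jordan_ginv_formula_iff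
  proof (intro ballI conjI)
    fix h s i assume "h \<in> {1..r}" "s \<in> S h" "i \<in> {1..h-1}"
    then have "(s, i) \<in> chain_index r S"
      unfolding chain_index_def by fastforce
    from g_basis[OF this] \<open>i \<in> {1..h-1}\<close>
    show "g ((\<phi> ^^ i) (v s)) = (\<phi> ^^ (i - 1)) (v s) + top_combination (lam i s)"
      by (simp add: chain_vector_def val_def)
  next
    fix h s assume "h \<in> {1..r}" "s \<in> S h"
    then have "(s, 0) \<in> chain_index r S"
      unfolding chain_index_def by fastforce
    from g_basis[OF this] show "g (v s) = chain_combination (alpha s)"
      by (simp add: chain_vector_def val_def)
  qed
  ultimately show ?thesis by blast
qed

end

theorem corollary3p11:
  fixes scale :: "'k::field \<Rightarrow> 'v::ab_group_add \<Rightarrow> 'v"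
    and \<phi> :: "'v \<Rightarrow> 'v"
    and r :: nat
    and S :: "nat \<Rightarrow> 'i set"
    and v :: "'i \<Rightarrow> 'v"
  assumes vs: "vector_space scale"
    and fp: "finite_potent scale \<phi>"
    and idx: "ast_index \<phi> = r"
    and disj: "\<forall>h1\<in>{1..r}. \<forall>h2\<in>{1..r}. h1 \<noteq> h2 \<longrightarrow> S h1 \<inter> S h2 = {}"
    and vU: "\<forall>h\<in>{1..r}. \<forall>s\<in>S h. v s \<in> U_part \<phi> \<and> (\<phi> ^^ h) (v s) = 0"
    and inj: "inj_on (\<lambda>(s, j). (\<phi> ^^ j) (v s)) {(s, j). \<exists>h\<in>{1..r}. s \<in> S h \<and> j < h}"
    and indep: "\<not> module.dependent scale
                   ((\<lambda>(s, j). (\<phi> ^^ j) (v s)) ` {(s, j). \<exists>h\<in>{1..r}. s \<in> S h \<and> j < h})"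
    and spans: "module.span scale
                   ((\<lambda>(s, j). (\<phi> ^^ j) (v s)) ` {(s, j). \<exists>h\<in>{1..r}. s \<in> S h \<and> j < h})
                 = U_part \<phi>"
  shows "(\<forall>g. endo_on scale (U_part \<phi>) g \<longrightarrow>
            (gen_inverse_on (U_part \<phi>) \<phi> g \<longleftrightarrow>
              (\<exists>lam alpha. admissible_scalars r S lam alpha \<and>
                           jordan_ginv_formula scale \<phi> r S v lam alpha g)))
       \<and> (\<forall>lam alpha. admissible_scalars r S lam alpha \<longrightarrow>
            (\<exists>g. endo_on scale (U_part \<phi>) g \<and> jordan_ginv_formula scale \<phi> r S v lam alpha g))"
proof -
  have "Vector_Spaces.linear scale scale \<phi>"
    using fp unfolding finite_potent_def by blast
  then interpret jordan_chains scale \<phi> r S v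
    using vs disj vU inj indep
    by (intro jordan_chains.intro jordan_chains_axioms.intro)
      (auto simp: disjoint_family_on_def chain_index_def chain_vector_def)
  have "U_part \<phi> = span jordan_basis"
    using spans by (simp add: chain_index_def chain_vector_def)
  then show ?thesis
    using jordan_ginv_formula_if_gen_inverse_on gen_inverse_on_if_jordan_ginv_formula
      ex_jordan_ginv_formula by metis
qed

end
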